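(* Let $\gamma>0$ and let $f\in\mathcal I^{\mathcal E}_\gamma$ with $\int_\gamma f=1$. For $k\in\mathbb Z_{\ge0}$ put $f_k(x)=q^{-k}f(q^{-k}x)$ (so $f_k\in\mathcal I^{\mathcal E}_\gamma$). Let $g$ be a function defined, together with all its iterated $q$-derivatives, on a domain $\Omega$, and suppose that for every $x\in\Omega$ there is $R_x>0$ with $|(\partial^kg)(x)|=O(R_x^k)$ as $k\to\infty$. Then $\lim_{l\to\infty}(f_l*_\gamma g)(x)=g(x)$ for every $x\in\Omega$. If moreover there are $C,R>0$ with $|(\partial^kg)(x)|\le CR^k$ for all $x\in\Omega$ and all $k$, the convergence is uniform on $\Omega$. In particular, if $g$ is holomorphic in a neighbourhood of $0$, then $f_l*_\gamma g\to g$ uniformly on some disk centered at $0$.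
   Context: Fix $q\in(0,1)$. Notation: $(a;q)_k=\prod_{j=0}^{k-1}(1-aq^j)$, $[k]_q!=(q;q)_k/(1-q)^k$. The $q$-derivative is $(\partial f)(x)=\frac{f(x)-f(qx)}{(1-q)x}$ (extended to $x=0$ by continuity for $f$ holomorphic near $0$). For $\gamma>0$, $L(\gamma)=\{\pm q^k\gamma:k\in\mathbb Z\}$ and $\int_\gamma f=(1-q)\sum_{k\in\mathbb Z}\sum_{\epsilon=\pm1}q^k\gamma f(\epsilon q^k\gamma)$ whenever absolutely convergent. $\mathcal I^\infty_\gamma$ is the set of functions $f$ on $L(\gamma)$ with $\int_\gamma|f(x)x^e|<\infty$ for all integers $e\ge0$. Moments: $\mu_{e,\gamma}(f)=q^{(e^2+e)/2}\int_\gamma f(x)x^e$. The $q$-moment series is $\mu_\gamma(f)(t)=\sum_{k\ge0}\mu_{k,\gamma}(f)t^k/[k]_q!$, and $\mathcal I^{\mathcal E}_\gamma$ is the set of $f\in\mathcal I^\infty_\gamma$ with $\mu_\gamma(f)$ an entire function. The $q$-convolution of $f\in\mathcal I^\infty_\gamma$ with $g$ is $(f*_\gamma g)(x)=\sum_{e\ge0}\frac{(-1)^e\mu_{e,\gamma}(f)}{[e]_q!}(\partial^eg)(x)$ at all $x$ where the $q$-derivatives are defined and the series converges absolutely. *)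

theory Defs
  imports "HOL-Analysis.Analysis"
begin

text \<open>Throughout, q is a real parameter with 0 < q < 1; functions f live on the
real lattice L(gamma) and take complex values; g is complex-valued on complex arguments.\<close>

definition qpoch :: "real \<Rightarrow> real \<Rightarrow> nat \<Rightarrow> real" where
  "qpoch a q k = (\<Prod>j<k. 1 - a * q ^ j)"

definition qfact :: "real \<Rightarrow> nat \<Rightarrow> real" where
  "qfact q k = qpoch q q k / (1 - q) ^ k"

text \<open>Summand of the q-integral over L(gamma), indexed by (k, eps) in Z x {-1,1}.\<close>
definition qint_term :: "real \<Rightarrow> real \<Rightarrow> (real \<Rightarrow> complex) \<Rightarrow> int \<times> real \<Rightarrow> complex" where
  "qint_term q \<gamma> f = (\<lambda>(k, \<epsilon>). complex_of_real (q powi k * \<gamma>) * f (\<epsilon> * q powi k * \<gamma>))"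

definition qint_abs_conv :: "real \<Rightarrow> real \<Rightarrow> (real \<Rightarrow> complex) \<Rightarrow> bool" where
  "qint_abs_conv q \<gamma> f \<longleftrightarrow> (\<lambda>p. norm (qint_term q \<gamma> f p)) summable_on (UNIV \<times> {-1, 1})"

definition qint :: "real \<Rightarrow> real \<Rightarrow> (real \<Rightarrow> complex) \<Rightarrow> complex" where
  "qint q \<gamma> f = complex_of_real (1 - q) * infsum (qint_term q \<gamma> f) (UNIV \<times> {-1, 1})"

definition I_inf :: "real \<Rightarrow> real \<Rightarrow> (real \<Rightarrow> complex) \<Rightarrow> bool" where
  "I_inf q \<gamma> f \<longleftrightarrow> (\<forall>e::nat. qint_abs_conv q \<gamma> (\<lambda>x. f x * complex_of_real (x ^ e)))"

definition qmoment :: "real \<Rightarrow> real \<Rightarrow> nat \<Rightarrow> (real \<Rightarrow> complex) \<Rightarrow> complex" where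
  "qmoment q \<gamma> e f = complex_of_real (q ^ ((e\<^sup>2 + e) div 2)) * qint q \<gamma> (\<lambda>x. f x * complex_of_real (x ^ e))"

definition I_E :: "real \<Rightarrow> real \<Rightarrow> (real \<Rightarrow> complex) \<Rightarrow> bool" where
  "I_E q \<gamma> f \<longleftrightarrow> I_inf q \<gamma> f \<and>
     (\<forall>t::complex. summable (\<lambda>k. qmoment q \<gamma> k f * t ^ k / complex_of_real (qfact q k)))"

definition qquot :: "real \<Rightarrow> (complex \<Rightarrow> complex) \<Rightarrow> complex \<Rightarrow> complex" where
  "qquot q g x = (g x - g (complex_of_real q * x)) / (complex_of_real (1 - q) * x)"

definition qder :: "real \<Rightarrow> (complex \<Rightarrow> complex) \<Rightarrow> complex \<Rightarrow> complex" where
  "qder q g x = (if x = 0 then Lim (at 0) (qquot q g) else qquot q g x)"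

definition qder_defined :: "real \<Rightarrow> (complex \<Rightarrow> complex) \<Rightarrow> complex \<Rightarrow> bool" where
  "qder_defined q g x \<longleftrightarrow> x \<noteq> 0 \<or> (\<exists>L. (qquot q g \<longlongrightarrow> L) (at 0))"

definition qconv_term :: "real \<Rightarrow> real \<Rightarrow> (real \<Rightarrow> complex) \<Rightarrow> (complex \<Rightarrow> complex) \<Rightarrow> complex \<Rightarrow> nat \<Rightarrow> complex" where
  "qconv_term q \<gamma> f g x e = (-1) ^ e * qmoment q \<gamma> e f / complex_of_real (qfact q e) * (qder q ^^ e) g x"

text \<open>q-convolution (meaningful where the series converges absolutely).\<close>
definition qconv :: "real \<Rightarrow> real \<Rightarrow> (real \<Rightarrow> complex) \<Rightarrow> (complex \<Rightarrow> complex) \<Rightarrow> complex \<Rightarrow> complex" where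
  "qconv q \<gamma> f g x = (\<Sum>e. qconv_term q \<gamma> f g x e)"

definition qdil :: "real \<Rightarrow> nat \<Rightarrow> (real \<Rightarrow> complex) \<Rightarrow> real \<Rightarrow> complex" where
  "qdil q k f x = complex_of_real (inverse (q ^ k)) * f (x / q ^ k)"

end

theory Submission
  imports Defs "HOL-Complex_Analysis.Cauchy_Integral_Formula"
begin

text \<open>Dilating \<open>f\<close> to \<open>f\<^sub>l\<close> multiplies its \<open>e\<close>-th q-moment by \<open>q\<^bsup>le\<^esup>\<close>. The zeroth term
of \<open>f\<^sub>l * g\<close> is therefore \<open>g(x) \<cdot> \<integral>f = g(x)\<close>, and every other term carries a factor
\<open>q\<^bsup>le\<^esup> \<le> q\<^sup>l\<close>. Because the q-moment series of \<open>f\<close> is entire, the bound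
\<open>|\<partial>\<^sup>kg(x)| \<le> C R\<^sup>k\<close> makes the remaining series converge absolutely, with a sum that does not
depend on \<open>l\<close>; so the error is \<open>O(q\<^sup>l)\<close>, uniformly wherever the bound is uniform.
For \<open>g\<close> holomorphic near 0, \<open>\<partial>\<close> maps Taylor coefficients \<open>a\<^sub>n\<close> to \<open>[n+1]\<^sub>q a\<^sub>n\<^sub>+\<^sub>1\<close>; since
\<open>[n]\<^sub>q \<le> 1/(1-q)\<close>, Cauchy's estimates \<open>|a\<^sub>n| \<le> B/\<rho>\<^sup>n\<close> give \<open>|\<partial>\<^sup>kg| \<le> 2B (\<rho>(1-q))\<^sup>-\<^sup>k\<close> on
the disk of radius \<open>\<rho>/2\<close>.\<close>

lemma qint_term_qdil_mult_power:
  assumes "0 < q"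
  shows "qint_term q \<gamma> (\<lambda>x. qdil q l f x * complex_of_real (x ^ e)) (k, \<epsilon>)
       = complex_of_real (q ^ (l * e)) * qint_term q \<gamma> (\<lambda>x. f x * complex_of_real (x ^ e)) (k - int l, \<epsilon>)"
proof -
  define y where "y = \<epsilon> * q powi (k - int l) * \<gamma>"
  define w where "w = q powi (k - int l) * \<gamma>"
  have "q powi k = q ^ l * q powi (k - int l)"
    using assms by (simp add: power_int_diff power_int_of_nat)
  then have point: "\<epsilon> * q powi k * \<gamma> = q ^ l * y" and weight: "q powi k * \<gamma> = q ^ l * w"
    unfolding y_def w_def by simp_all
  have ql: "q ^ l \<noteq> 0"
    using assms by simp
  show ?thesis
    unfolding qint_term_def qdil_def prod.case point weight nonzero_mult_div_cancel_left[OF ql]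
    unfolding y_def[symmetric] w_def[symmetric] power_mult_distrib power_mult of_real_mult
    using ql assms by (simp add: field_simps)
qed

lemma qmoment_qdil:
  assumes "0 < q"
  shows "qmoment q \<gamma> e (qdil q l f) = complex_of_real (q ^ (l * e)) * qmoment q \<gamma> e f"
proof -
  have shift: "bij_betw (\<lambda>(k, \<epsilon>). (k - int l, \<epsilon>)) (UNIV \<times> {-1, 1}) (UNIV \<times> {-1, 1::real})"
    by (rule bij_betwI[where g="\<lambda>(k, \<epsilon>). (k + int l, \<epsilon>)"]) auto
  let ?T = "qint_term q \<gamma> (\<lambda>x. f x * complex_of_real (x ^ e))"
  have "qint_term q \<gamma> (\<lambda>x. qdil q l f x * complex_of_real (x ^ e))
      = (\<lambda>p. complex_of_real (q ^ (l * e)) * ?T ((\<lambda>(k, \<epsilon>). (k - int l, \<epsilon>)) p))"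
    using qint_term_qdil_mult_power[OF assms] by (auto simp: fun_eq_iff)
  then have "qint q \<gamma> (\<lambda>x. qdil q l f x * complex_of_real (x ^ e))
      = complex_of_real (1 - q) * (complex_of_real (q ^ (l * e)) *
          infsum (\<lambda>p. ?T ((\<lambda>(k, \<epsilon>). (k - int l, \<epsilon>)) p)) (UNIV \<times> {-1, 1}))"
    unfolding qint_def by (simp only: infsum_cmult_right')
  also have "\<dots> = complex_of_real (q ^ (l * e)) * qint q \<gamma> (\<lambda>x. f x * complex_of_real (x ^ e))"
    unfolding qint_def infsum_reindex_bij_betw[OF shift] by (simp only: mult_ac)
  finally have "qint q \<gamma> (\<lambda>x. qdil q l f x * complex_of_real (x ^ e))
      = complex_of_real (q ^ (l * e)) * qint q \<gamma> (\<lambda>x. f x * complex_of_real (x ^ e))" .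
  then show ?thesis
    unfolding qmoment_def by simp
qed

definition qmoment_coeff :: "real \<Rightarrow> real \<Rightarrow> (real \<Rightarrow> complex) \<Rightarrow> nat \<Rightarrow> complex" where
  "qmoment_coeff q \<gamma> f e = qmoment q \<gamma> e f / complex_of_real (qfact q e)"

lemma summable_norm_qmoment_coeff_mult_power:
  assumes "I_E q \<gamma> f" and "0 \<le> R"
  shows "summable (\<lambda>e. norm (qmoment_coeff q \<gamma> f e) * R ^ e)"
proof -
  have "summable (\<lambda>e. qmoment q \<gamma> e f * complex_of_real (R + 1) ^ e / complex_of_real (qfact q e))"
    using assms(1) unfolding I_E_def by blast
  then have "summable (\<lambda>e. qmoment_coeff q \<gamma> f e * complex_of_real (R + 1) ^ e)"
    unfolding qmoment_coeff_def by (simp add: divide_inverse mult_ac)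
  from powser_insidea[OF this, of "complex_of_real R"] show ?thesis
    using assms(2) by (simp add: norm_mult norm_power)
qed

lemma norm_qconv_term_qdil:
  assumes "0 < q"
  shows "norm (qconv_term q \<gamma> (qdil q l f) g x e)
       = q ^ (l * e) * (norm (qmoment_coeff q \<gamma> f e) * norm ((qder q ^^ e) g x))"
  using assms
  by (simp add: qconv_term_def qmoment_coeff_def qmoment_qdil norm_mult norm_divide norm_power)

lemma qconv_term_qdil_0:
  assumes "0 < q" and "qint q \<gamma> f = 1"
  shows "qconv_term q \<gamma> (qdil q l f) g x 0 = g x"
  unfolding qconv_term_def qmoment_qdil[OF assms(1)]
  using assms(2) by (simp add: qmoment_def qfact_def qpoch_def)

lemma qconv_qdil_error_bound:
  assumes q: "0 < q" "q < 1" and f1: "qint q \<gamma> f = 1"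
    and D: "\<And>e. norm ((qder q ^^ e) g x) \<le> D e"
    and S: "summable (\<lambda>e. norm (qmoment_coeff q \<gamma> f e) * D e)"
  shows "summable (\<lambda>e. norm (qconv_term q \<gamma> (qdil q l f) g x e))"
    and "norm (qconv q \<gamma> (qdil q l f) g x - g x) \<le> q ^ l * (\<Sum>e. norm (qmoment_coeff q \<gamma> f e) * D e)"
proof -
  define a where "a e = norm (qmoment_coeff q \<gamma> f e) * D e" for e
  define t where "t = qconv_term q \<gamma> (qdil q l f) g x"
  have a_nonneg: "0 \<le> a e" for e
    unfolding a_def using order_trans[OF norm_ge_zero D] by simp
  have t_le: "norm (t e) \<le> q ^ (l * e) * a e" for e
    unfolding t_def a_def norm_qconv_term_qdil[OF q(1)]
    using q by (intro mult_left_mono D) auto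
  have t_le_a: "norm (t e) \<le> a e" for e
  proof -
    have "q ^ (l * e) * a e \<le> a e"
      using q a_nonneg by (intro mult_left_le_one_le power_le_one) auto
    then show ?thesis
      using t_le order_trans by blast
  qed
  have t_Suc_le: "norm (t (Suc e)) \<le> q ^ l * a (Suc e)" for e
  proof -
    have "q ^ (l * Suc e) \<le> q ^ l"
      using q by (intro power_decreasing) auto
    then show ?thesis
      using t_le[of "Suc e"] a_nonneg[of "Suc e"] by (meson mult_right_mono order_trans)
  qed
  have a_summable: "summable a"
    using S unfolding a_def .
  have t_summable: "summable (\<lambda>e. norm (t e))"
    by (rule summable_comparison_test'[OF a_summable]) (use t_le_a in simp)
  then show "summable (\<lambda>e. norm (qconv_term q \<gamma> (qdil q l f) g x e))"
    unfolding t_def .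
  have "qconv q \<gamma> (qdil q l f) g x - g x = (\<Sum>e. t (Suc e))"
    using suminf_split_head[OF summable_norm_cancel[OF t_summable]]
    unfolding qconv_def t_def qconv_term_qdil_0[OF q(1) f1] by simp
  also have "norm \<dots> \<le> (\<Sum>e. q ^ l * a (Suc e))"
    using a_summable by (intro norm_suminf_le t_Suc_le summable_mult) (simp add: summable_Suc_iff)
  also have "\<dots> = q ^ l * ((\<Sum>e. a e) - a 0)"
    using a_summable by (simp add: suminf_mult summable_Suc_iff suminf_split_head)
  also have "\<dots> \<le> q ^ l * (\<Sum>e. a e)"
    using q a_nonneg by (simp add: mult_left_mono)
  finally show "norm (qconv q \<gamma> (qdil q l f) g x - g x) \<le> q ^ l * (\<Sum>e. norm (qmoment_coeff q \<gamma> f e) * D e)"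
    unfolding a_def .
qed

lemma
  assumes q: "0 < q" "q < 1" and f: "I_E q \<gamma> f" and f1: "qint q \<gamma> f = 1" and R: "0 \<le> R"
    and growth: "\<forall>\<^sub>F k in sequentially. norm ((qder q ^^ k) g x) \<le> C * R ^ k"
  shows summable_norm_qconv_term_qdil: "summable (\<lambda>e. norm (qconv_term q \<gamma> (qdil q l f) g x e))"
    and qconv_qdil_tendsto: "(\<lambda>l. qconv q \<gamma> (qdil q l f) g x) \<longlonglongrightarrow> g x"
proof -
  let ?D = "\<lambda>e. norm ((qder q ^^ e) g x)"
  have S: "summable (\<lambda>e. norm (qmoment_coeff q \<gamma> f e) * ?D e)"
  proof (rule summable_comparison_test_ev)
    show "summable (\<lambda>e. C * (norm (qmoment_coeff q \<gamma> f e) * R ^ e))"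
      using summable_norm_qmoment_coeff_mult_power[OF f R] by (rule summable_mult)
    show "\<forall>\<^sub>F e in sequentially. norm (norm (qmoment_coeff q \<gamma> f e) * ?D e)
                                    \<le> C * (norm (qmoment_coeff q \<gamma> f e) * R ^ e)"
      using growth
      by eventually_elim (simp add: mult.left_commute[of C] mult_left_mono)
  qed
  note estimate = qconv_qdil_error_bound[OF q f1 order_refl S]
  show "summable (\<lambda>e. norm (qconv_term q \<gamma> (qdil q l f) g x e))"
    by (rule estimate(1))
  have "(\<lambda>l. q ^ l * (\<Sum>e. norm (qmoment_coeff q \<gamma> f e) * ?D e)) \<longlonglongrightarrow> 0"
    using q by (intro tendsto_mult_left_zero LIMSEQ_power_zero) simp
  then have "(\<lambda>l. qconv q \<gamma> (qdil q l f) g x - g x) \<longlonglongrightarrow> 0"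
    by (rule Lim_null_comparison[rotated]) (use estimate(2) in simp)
  then show "(\<lambda>l. qconv q \<gamma> (qdil q l f) g x) \<longlonglongrightarrow> g x"
    by (simp add: LIM_zero_iff)
qed

lemma uniform_limit_qconv_qdil:
  assumes q: "0 < q" "q < 1" and f: "I_E q \<gamma> f" and f1: "qint q \<gamma> f = 1" and R: "0 \<le> R"
    and bound: "\<And>x k. x \<in> \<Omega> \<Longrightarrow> norm ((qder q ^^ k) g x) \<le> C * R ^ k"
  shows "uniform_limit \<Omega> (\<lambda>l. qconv q \<gamma> (qdil q l f) g) g sequentially"
proof (rule uniform_limitI)
  define M where "M = (\<Sum>e. norm (qmoment_coeff q \<gamma> f e) * (C * R ^ e))"
  have S: "summable (\<lambda>e. norm (qmoment_coeff q \<gamma> f e) * (C * R ^ e))"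
    using summable_mult[OF summable_norm_qmoment_coeff_mult_power[OF f R], of C]
    by (simp add: mult.left_commute)
  have estimate: "dist (qconv q \<gamma> (qdil q l f) g x) (g x) \<le> q ^ l * M" if "x \<in> \<Omega>" for x l
    using qconv_qdil_error_bound(2)[OF q f1 bound[OF that] S] unfolding M_def dist_norm .
  fix \<epsilon> :: real
  assume "0 < \<epsilon>"
  moreover have "(\<lambda>l. q ^ l * M) \<longlonglongrightarrow> 0"
    using q by (intro tendsto_mult_left_zero LIMSEQ_power_zero) simp
  ultimately have "\<forall>\<^sub>F l in sequentially. q ^ l * M < \<epsilon>"
    by (simp add: order_tendsto_iff)
  then show "\<forall>\<^sub>F l in sequentially. \<forall>x\<in>\<Omega>. dist (qconv q \<gamma> (qdil q l f) g x) (g x) < \<epsilon>"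
    by eventually_elim (use estimate in \<open>blast intro: le_less_trans\<close>)
qed

definition qnumber :: "real \<Rightarrow> nat \<Rightarrow> real" where
  "qnumber q n = (1 - q ^ n) / (1 - q)"

lemma qnumber_nonneg: "0 \<le> q \<Longrightarrow> q < 1 \<Longrightarrow> 0 \<le> qnumber q n"
  unfolding qnumber_def by (simp add: power_le_one)

lemma qnumber_le: "0 \<le> q \<Longrightarrow> q < 1 \<Longrightarrow> qnumber q n \<le> 1 / (1 - q)"
  unfolding qnumber_def by (simp add: divide_right_mono)

definition qder_coeffs :: "real \<Rightarrow> (nat \<Rightarrow> complex) \<Rightarrow> nat \<Rightarrow> complex" where
  "qder_coeffs q a n = complex_of_real (qnumber q (Suc n)) * a (Suc n)"

lemma qquot_powser:
  assumes q: "0 < q" "q < 1" and h: "\<And>y. y \<in> ball 0 \<rho> \<Longrightarrow> (\<lambda>n. a n * y ^ n) sums h y"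
    and y: "y \<in> ball 0 \<rho>" "y \<noteq> 0"
  shows "(\<lambda>n. qder_coeffs q a n * y ^ n) sums qquot q h y"
proof -
  have "norm (complex_of_real q * y) \<le> norm y"
    using q by (simp add: norm_mult mult_left_le_one_le)
  then have qy: "complex_of_real q * y \<in> ball 0 \<rho>"
    using y(1) by simp
  have "(\<lambda>n. a n * y ^ n - a n * (complex_of_real q * y) ^ n) sums (h y - h (complex_of_real q * y))"
    by (intro sums_diff h y qy)
  then have "(\<lambda>n. a (Suc n) * y ^ Suc n - a (Suc n) * (complex_of_real q * y) ^ Suc n)
               sums (h y - h (complex_of_real q * y))"
    by (subst sums_Suc_iff) simp
  moreover have "a (Suc n) * y ^ Suc n - a (Suc n) * (complex_of_real q * y) ^ Suc n
      = complex_of_real (1 - q) * y * (qder_coeffs q a n * y ^ n)" for n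
  proof -
    have qnumber: "complex_of_real (1 - q) * complex_of_real (qnumber q (Suc n)) = 1 - complex_of_real q ^ Suc n"
      using q unfolding qnumber_def of_real_mult[symmetric] by simp
    have "complex_of_real (1 - q) * y * (qder_coeffs q a n * y ^ n)
        = a (Suc n) * y ^ Suc n * (complex_of_real (1 - q) * complex_of_real (qnumber q (Suc n)))"
      unfolding qder_coeffs_def by (simp only: power_Suc mult_ac)
    then show ?thesis
      unfolding qnumber by (simp add: power_mult_distrib algebra_simps)
  qed
  ultimately have "(\<lambda>n. complex_of_real (1 - q) * y * (qder_coeffs q a n * y ^ n))
                     sums (h y - h (complex_of_real q * y))"
    by simp
  moreover have "h y - h (complex_of_real q * y) = complex_of_real (1 - q) * y * qquot q h y"
    using q y(2) by (simp add: qquot_def)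
  ultimately show ?thesis
    using q y(2) by (simp add: sums_mult_iff)
qed

lemma qder_powser:
  assumes q: "0 < q" "q < 1" and h: "\<And>y. y \<in> ball 0 \<rho> \<Longrightarrow> (\<lambda>n. a n * y ^ n) sums h y"
    and x: "x \<in> ball 0 \<rho>"
  shows "(\<lambda>n. qder_coeffs q a n * x ^ n) sums qder q h x"
proof (cases "x = 0")
  case False
  then show ?thesis
    using qquot_powser[OF q h x] by (simp add: qder_def)
next
  case True
  \<comment> \<open>The series of the difference quotients is a power series, hence continuous at 0.\<close>
  define P where "P y = (\<Sum>n. qder_coeffs q a n * y ^ n)" for y
  have \<rho>: "0 < \<rho>"
    using x by (metis mem_ball_0 norm_ge_zero le_less_trans)
  have quot: "qquot q h y = P y" if "y \<in> ball 0 \<rho>" "y \<noteq> 0" for y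
    using qquot_powser[OF q h that] unfolding P_def by (simp add: sums_iff)
  have "summable (\<lambda>n. qder_coeffs q a n * complex_of_real (\<rho> / 2) ^ n)"
    using qquot_powser[OF q h, where y="complex_of_real (\<rho> / 2)"] \<rho> by (auto simp: sums_iff)
  then have "isCont P 0"
    unfolding P_def by (rule isCont_powser) (use \<rho> in simp)
  then have "(P \<longlongrightarrow> P 0) (at 0)"
    by (simp add: isCont_def)
  moreover have "\<forall>\<^sub>F y in at 0. P y = qquot q h y"
    unfolding eventually_at using \<rho> quot by (intro exI[of _ \<rho>]) (auto simp: dist_norm)
  ultimately have "(qquot q h \<longlongrightarrow> P 0) (at 0)"
    by (rule Lim_transform_eventually)
  then have "qder q h 0 = qder_coeffs q a 0"
    unfolding qder_def P_def by (simp add: tendsto_Lim)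
  then show ?thesis
    using True by simp
qed

lemma qder_iterate_powser:
  assumes q: "0 < q" "q < 1" and h: "\<And>y. y \<in> ball 0 \<rho> \<Longrightarrow> (\<lambda>n. a n * y ^ n) sums h y"
    and x: "x \<in> ball 0 \<rho>"
  shows "(\<lambda>n. (qder_coeffs q ^^ k) a n * x ^ n) sums (qder q ^^ k) h x"
  using x
proof (induction k arbitrary: x)
  case 0
  then show ?case using h by simp
next
  case (Suc k)
  then show ?case
    using qder_powser[OF q, of \<rho> "(qder_coeffs q ^^ k) a"] by simp
qed

lemma norm_qder_coeffs_iterate_le:
  assumes q: "0 \<le> q" "q < 1" and \<rho>: "0 < \<rho>" and a: "\<And>n. norm (a n) \<le> B / \<rho> ^ n"
  shows "norm ((qder_coeffs q ^^ k) a n) \<le> B * (1 / (\<rho> * (1 - q))) ^ k / \<rho> ^ n"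
proof (induction k arbitrary: n)
  case 0
  then show ?case using a by simp
next
  case (Suc k)
  have "0 \<le> B"
    using order_trans[OF norm_ge_zero a[of 0]] by simp
  have "norm ((qder_coeffs q ^^ Suc k) a n)
      = qnumber q (Suc n) * norm ((qder_coeffs q ^^ k) a (Suc n))"
    using qnumber_nonneg[OF q] by (simp add: qder_coeffs_def norm_mult)
  also have "\<dots> \<le> 1 / (1 - q) * (B * (1 / (\<rho> * (1 - q))) ^ k / \<rho> ^ Suc n)"
    using q \<open>0 \<le> B\<close> \<rho> by (intro mult_mono Suc.IH qnumber_le) auto
  also have "\<dots> = B * (1 / (\<rho> * (1 - q))) ^ Suc k / \<rho> ^ n"
    using q \<rho> by (simp add: field_simps)
  finally show ?case .
qed

lemma norm_powser_sum_le:
  fixes c :: "nat \<Rightarrow> 'a :: {real_normed_field, banach}"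
  assumes s: "(\<lambda>n. c n * x ^ n) sums s" and c: "\<And>n. norm (c n) \<le> K / \<rho> ^ n" and x: "norm x < \<rho>"
  shows "norm s \<le> K / (1 - norm x / \<rho>)"
proof -
  have \<rho>: "0 < \<rho>"
    using x norm_ge_zero[of x] by linarith
  have term_le: "norm (c n * x ^ n) \<le> K * (norm x / \<rho>) ^ n" for n
  proof -
    have "norm (c n) * norm x ^ n \<le> K / \<rho> ^ n * norm x ^ n"
      by (rule mult_right_mono[OF c]) simp
    then show ?thesis
      by (simp add: norm_mult norm_power power_divide)
  qed
  have geometric: "(\<lambda>n. K * (norm x / \<rho>) ^ n) sums (K / (1 - norm x / \<rho>))"
    using sums_mult[OF geometric_sums[of "norm x / \<rho>"], of K] x \<rho> by simp
  have "norm s = norm (\<Sum>n. c n * x ^ n)"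
    using s by (simp add: sums_iff)
  also have "\<dots> \<le> (\<Sum>n. K * (norm x / \<rho>) ^ n)"
    using geometric by (intro norm_suminf_le term_le) (simp add: sums_iff)
  also have "\<dots> = K / (1 - norm x / \<rho>)"
    using geometric by (simp add: sums_iff)
  finally show ?thesis .
qed

lemma holomorphic_taylor_coeffs_bound:
  assumes "open U" "0 \<in> U" "g holomorphic_on U"
  obtains \<rho> B where "0 < \<rho>" "\<And>n. norm ((deriv ^^ n) g 0 / fact n) \<le> B / \<rho> ^ n"
    "\<And>x. x \<in> ball 0 \<rho> \<Longrightarrow> (\<lambda>n. (deriv ^^ n) g 0 / fact n * x ^ n) sums g x"
proof -
  obtain \<epsilon> where \<epsilon>: "0 < \<epsilon>" "ball 0 \<epsilon> \<subseteq> U"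
    using assms(1,2) openE by blast
  define \<rho> where "\<rho> = \<epsilon> / 2"
  have \<rho>: "0 < \<rho>" "cball 0 \<rho> \<subseteq> ball 0 \<epsilon>"
    using \<epsilon>(1) by (auto simp: \<rho>_def)
  have hol: "g holomorphic_on ball 0 \<epsilon>"
    using assms(3) \<epsilon>(2) by (rule holomorphic_on_subset)
  have cont: "continuous_on (cball 0 \<rho>) g"
    using holomorphic_on_imp_continuous_on[OF hol] \<rho>(2) by (rule continuous_on_subset)
  obtain B where B: "\<And>x. x \<in> cball 0 \<rho> \<Longrightarrow> norm (g x) \<le> B"
    using compact_imp_bounded[OF compact_continuous_image[OF cont compact_cball]]
    unfolding bounded_iff by blast
  show ?thesis
  proof
    show "0 < \<rho>" by (fact \<rho>(1))
    show "norm ((deriv ^^ n) g 0 / fact n) \<le> B / \<rho> ^ n" for n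
    proof -
      have "g holomorphic_on ball 0 \<rho>"
        using hol \<rho>(2) ball_subset_cball by (blast intro: holomorphic_on_subset)
      then have "norm ((deriv ^^ n) g 0) \<le> fact n * B / \<rho> ^ n"
        using \<rho> B by (intro Cauchy_inequality cont) auto
      then show ?thesis
        by (simp add: norm_divide field_simps)
    qed
    show "(\<lambda>n. (deriv ^^ n) g 0 / fact n * x ^ n) sums g x" if "x \<in> ball 0 \<rho>" for x
    proof -
      have "x \<in> ball 0 \<epsilon>"
        using that \<rho>(2) ball_subset_cball by blast
      then show ?thesis
        using holomorphic_power_series[OF hol] by simp
    qed
  qed
qed

lemma holomorphic_qder_iterate_bound:
  assumes q: "0 < q" "q < 1" and U: "open U" "0 \<in> U" "g holomorphic_on U"
  obtains r C R where "0 < r" "0 \<le> R" "\<And>x k. x \<in> ball 0 r \<Longrightarrow> norm ((qder q ^^ k) g x) \<le> C * R ^ k"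
proof -
  obtain \<rho> B where \<rho>: "0 < \<rho>" and coeffs: "\<And>n. norm ((deriv ^^ n) g 0 / fact n) \<le> B / \<rho> ^ n"
    and taylor: "\<And>x. x \<in> ball 0 \<rho> \<Longrightarrow> (\<lambda>n. (deriv ^^ n) g 0 / fact n * x ^ n) sums g x"
    using holomorphic_taylor_coeffs_bound[OF U] by blast
  define R where "R = 1 / (\<rho> * (1 - q))"
  have "0 \<le> B"
    using order_trans[OF norm_ge_zero coeffs[of 0]] by simp
  have "norm ((qder q ^^ k) g x) \<le> (2 * B) * R ^ k" if x: "x \<in> ball 0 (\<rho> / 2)" for x k
  proof -
    have "norm x < \<rho>"
      using x \<rho> by simp
    have "norm ((qder q ^^ k) g x) \<le> B * R ^ k / (1 - norm x / \<rho>)"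
      using qder_iterate_powser[OF q taylor] norm_qder_coeffs_iterate_le[OF _ q(2) \<rho> coeffs] q \<open>norm x < \<rho>\<close>
      unfolding R_def by (intro norm_powser_sum_le) auto
    also have "\<dots> \<le> B * R ^ k * 2"
    proof -
      have "1 / (1 - norm x / \<rho>) \<le> 2"
        using x \<rho> by (simp add: field_simps)
      moreover have "0 \<le> B * R ^ k"
        using \<rho> q \<open>0 \<le> B\<close> by (simp add: R_def)
      ultimately show ?thesis
        by (metis mult_left_mono times_divide_eq_right mult_1_right)
    qed
    finally show ?thesis
      by (simp add: mult_ac)
  qed
  moreover have "0 \<le> R"
    using \<rho> q by (simp add: R_def)
  ultimately show ?thesis
    using that[of "\<rho> / 2" R "2 * B"] \<rho> by simp
qed

theorem proposition3p5:
  fixes q \<gamma> :: real and f :: "real \<Rightarrow> complex"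
    and g :: "complex \<Rightarrow> complex" and \<Omega> :: "complex set"
  assumes q: "0 < q" "q < 1"
    and \<gamma>: "0 < \<gamma>"
    and f: "I_E q \<gamma> f"
    and f1: "qint q \<gamma> f = 1"
  shows
    "((\<forall>k. \<forall>x\<in>\<Omega>. qder_defined q ((qder q ^^ k) g) x) \<and>
      (\<forall>x\<in>\<Omega>. \<exists>R>0. \<exists>C. \<forall>\<^sub>F k in sequentially. norm ((qder q ^^ k) g x) \<le> C * R ^ k)
      \<longrightarrow> (\<forall>x\<in>\<Omega>. (\<forall>l. summable (\<lambda>e. norm (qconv_term q \<gamma> (qdil q l f) g x e))) \<and>
              (\<lambda>l. qconv q \<gamma> (qdil q l f) g x) \<longlonglongrightarrow> g x))
    \<and> ((\<forall>k. \<forall>x\<in>\<Omega>. qder_defined q ((qder q ^^ k) g) x) \<and>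
      (\<exists>C>0. \<exists>R>0. \<forall>x\<in>\<Omega>. \<forall>k. norm ((qder q ^^ k) g x) \<le> C * R ^ k)
      \<longrightarrow> uniform_limit \<Omega> (\<lambda>l. qconv q \<gamma> (qdil q l f) g) g sequentially)
    \<and> ((\<exists>U. open U \<and> 0 \<in> U \<and> g holomorphic_on U)
      \<longrightarrow> (\<exists>r>0. (\<forall>x\<in>ball 0 r. \<forall>l. summable (\<lambda>e. norm (qconv_term q \<gamma> (qdil q l f) g x e))) \<and>
                 uniform_limit (ball 0 r) (\<lambda>l. qconv q \<gamma> (qdil q l f) g) g sequentially))"
proof (intro conjI impI)
  assume "(\<forall>k. \<forall>x\<in>\<Omega>. qder_defined q ((qder q ^^ k) g) x) \<and>
      (\<forall>x\<in>\<Omega>. \<exists>R>0. \<exists>C. \<forall>\<^sub>F k in sequentially. norm ((qder q ^^ k) g x) \<le> C * R ^ k)"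
  then show "\<forall>x\<in>\<Omega>. (\<forall>l. summable (\<lambda>e. norm (qconv_term q \<gamma> (qdil q l f) g x e))) \<and>
              (\<lambda>l. qconv q \<gamma> (qdil q l f) g x) \<longlonglongrightarrow> g x"
    using summable_norm_qconv_term_qdil[OF q f f1] qconv_qdil_tendsto[OF q f f1]
    by (meson less_imp_le)
next
  assume "(\<forall>k. \<forall>x\<in>\<Omega>. qder_defined q ((qder q ^^ k) g) x) \<and>
      (\<exists>C>0. \<exists>R>0. \<forall>x\<in>\<Omega>. \<forall>k. norm ((qder q ^^ k) g x) \<le> C * R ^ k)"
  then obtain C R where R: "0 < R"
    and bound: "\<And>x k. x \<in> \<Omega> \<Longrightarrow> norm ((qder q ^^ k) g x) \<le> C * R ^ k"
    by blast
  show "uniform_limit \<Omega> (\<lambda>l. qconv q \<gamma> (qdil q l f) g) g sequentially"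
    using R by (intro uniform_limit_qconv_qdil[OF q f f1 _ bound]) simp
next
  assume "\<exists>U. open U \<and> 0 \<in> U \<and> g holomorphic_on U"
  then obtain r C R where r: "0 < r" and R: "0 \<le> R"
    and bound: "\<And>x k. x \<in> ball 0 r \<Longrightarrow> norm ((qder q ^^ k) g x) \<le> C * R ^ k"
    using holomorphic_qder_iterate_bound[OF q] by metis
  have "summable (\<lambda>e. norm (qconv_term q \<gamma> (qdil q l f) g x e))" if "x \<in> ball 0 r" for x l
    using bound[OF that] by (intro summable_norm_qconv_term_qdil[OF q f f1 R] always_eventually) auto
  then show "\<exists>r>0. (\<forall>x\<in>ball 0 r. \<forall>l. summable (\<lambda>e. norm (qconv_term q \<gamma> (qdil q l f) g x e))) \<and>
                 uniform_limit (ball 0 r) (\<lambda>l. qconv q \<gamma> (qdil q l f) g) g sequentially"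
    using r uniform_limit_qconv_qdil[OF q f f1 R bound] by blast
qed

end
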